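(* Let $(X,\varphi)$ be a convex geometry and suppose the lattice $L:=Cl(X,\varphi)$ is weakly atomic. Then $L$ is spatial. Moreover, there exist a subset $Y\subseteq X$ and a closure operator $\psi$ on $Y$ satisfying the anti-exchange axiom such that $L$ is isomorphic to $Cl(Y,\psi)$ and $\psi(\{y\})$ is completely join-irreducible in $Cl(Y,\psi)$ for every $y\in Y$.
   Context: A convex geometry is a pair $(X,\varphi)$ where $X$ is a non-empty set and $\varphi$ is a closure operator on $X$ with $\varphi(\emptyset)=\emptyset$ satisfying the anti-exchange axiom: for all $\varphi$-closed $A$ and all $x\neq y$ in $X$, if $x\in\varphi(A\cup\{y\})$ and $x\notin A$ then $y\notin\varphi(A\cup\{x\})$. $Cl(X,\varphi)$ is the complete lattice of $\varphi$-closed sets ordered by inclusion. A lattice is weakly atomic if every interval $[a,b]$ with $a<b$ contains a cover $c\prec d$. An element $y$ of a complete lattice is completely join-irreducible if it has a lower cover $y_*$ such that $z<y$ implies $z\leq y_*$. A complete lattice is spatial if every element is a join of completely join-irreducible elements. *)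

theory Defs
  imports Main
begin

text \<open>A closure operator on the ground set X (its behaviour outside subsets of X is irrelevant).\<close>
definition closure_operator :: "'a set \<Rightarrow> ('a set \<Rightarrow> 'a set) \<Rightarrow> bool" where
  "closure_operator X \<phi> \<longleftrightarrow>
     (\<forall>A. A \<subseteq> X \<longrightarrow> A \<subseteq> \<phi> A \<and> \<phi> A \<subseteq> X \<and> \<phi> (\<phi> A) = \<phi> A) \<and>
     (\<forall>A B. A \<subseteq> B \<and> B \<subseteq> X \<longrightarrow> \<phi> A \<subseteq> \<phi> B)"

definition closed_sets :: "'a set \<Rightarrow> ('a set \<Rightarrow> 'a set) \<Rightarrow> 'a set set" ("Cl") where
  "Cl X \<phi> = {A. A \<subseteq> X \<and> \<phi> A = A}"

definition anti_exchange :: "'a set \<Rightarrow> ('a set \<Rightarrow> 'a set) \<Rightarrow> bool" where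
  "anti_exchange X \<phi> \<longleftrightarrow>
     (\<forall>A \<in> Cl X \<phi>. \<forall>x \<in> X. \<forall>y \<in> X. x \<noteq> y \<longrightarrow> x \<in> \<phi> (A \<union> {y}) \<longrightarrow> x \<notin> A
        \<longrightarrow> y \<notin> \<phi> (A \<union> {x}))"

definition convex_geometry :: "'a set \<Rightarrow> ('a set \<Rightarrow> 'a set) \<Rightarrow> bool" where
  "convex_geometry X \<phi> \<longleftrightarrow> X \<noteq> {} \<and> closure_operator X \<phi> \<and> \<phi> {} = {} \<and> anti_exchange X \<phi>"

definition covers_in :: "'a set set \<Rightarrow> 'a set \<Rightarrow> 'a set \<Rightarrow> bool" where
  "covers_in L c d \<longleftrightarrow> c \<in> L \<and> d \<in> L \<and> c \<subset> d \<and> \<not> (\<exists>e \<in> L. c \<subset> e \<and> e \<subset> d)"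

definition weakly_atomic :: "'a set set \<Rightarrow> bool" where
  "weakly_atomic L \<longleftrightarrow>
     (\<forall>a \<in> L. \<forall>b \<in> L. a \<subset> b \<longrightarrow> (\<exists>c d. a \<subseteq> c \<and> d \<subseteq> b \<and> covers_in L c d))"

definition completely_join_irreducible :: "'a set set \<Rightarrow> 'a set \<Rightarrow> bool" where
  "completely_join_irreducible L y \<longleftrightarrow> y \<in> L \<and>
     (\<exists>y' \<in> L. covers_in L y' y \<and> (\<forall>z \<in> L. z \<subset> y \<longrightarrow> z \<subseteq> y'))"

definition is_join_in :: "'a set set \<Rightarrow> 'a set set \<Rightarrow> 'a set \<Rightarrow> bool" where
  "is_join_in L S a \<longleftrightarrow> a \<in> L \<and> (\<forall>s \<in> S. s \<subseteq> a) \<and>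
     (\<forall>b \<in> L. (\<forall>s \<in> S. s \<subseteq> b) \<longrightarrow> a \<subseteq> b)"

definition spatial :: "'a set set \<Rightarrow> bool" where
  "spatial L \<longleftrightarrow> (\<forall>a \<in> L. \<exists>S. S \<subseteq> {y. completely_join_irreducible L y} \<and> is_join_in L S a)"

definition order_iso :: "'a set set \<Rightarrow> 'b set set \<Rightarrow> bool" where
  "order_iso L M \<longleftrightarrow> (\<exists>f. bij_betw f L M \<and> (\<forall>A \<in> L. \<forall>B \<in> L. A \<subseteq> B \<longleftrightarrow> f A \<subseteq> f B))"

end

theory Submission
  imports Defs
begin

text \<open>Call \<open>x\<close> an extreme point if \<open>\<phi>{x} - {x}\<close> is closed. In a convex geometry every
  cover \<open>c \<prec> d\<close> of closed sets adds a single point \<open>x\<close>; weak atomicity inside the interval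
  \<open>[\<phi>{x} \<inter> c, \<phi>{x}]\<close> then shows that \<open>x\<close> is extreme. Hence every proper interval \<open>[B, A]\<close>
  contains an extreme point of \<open>A - B\<close>, so each closed set is the closure of its extreme
  points. For an extreme point \<open>x\<close>, \<open>\<phi>{x}\<close> is completely join-irreducible with lower cover
  \<open>\<phi>{x} - {x}\<close>, which gives spatiality; restricting \<open>\<phi>\<close> to the extreme points \<open>Y\<close> gives the
  representation \<open>(Y, \<psi>)\<close> with \<open>C \<mapsto> C \<inter> Y\<close> as the isomorphism.\<close>

lemma closure_operator_extensive: "closure_operator X \<phi> \<Longrightarrow> A \<subseteq> X \<Longrightarrow> A \<subseteq> \<phi> A"
  unfolding closure_operator_def by simp

lemma closure_operator_mono:
  "closure_operator X \<phi> \<Longrightarrow> A \<subseteq> B \<Longrightarrow> B \<subseteq> X \<Longrightarrow> \<phi> A \<subseteq> \<phi> B"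
  unfolding closure_operator_def by simp

lemma mem_Cl_iff: "A \<in> Cl X \<phi> \<longleftrightarrow> A \<subseteq> X \<and> \<phi> A = A"
  by (simp add: closed_sets_def)

lemma closure_in_Cl: "closure_operator X \<phi> \<Longrightarrow> A \<subseteq> X \<Longrightarrow> \<phi> A \<in> Cl X \<phi>"
  unfolding closure_operator_def mem_Cl_iff by simp

lemma closure_least:
  "closure_operator X \<phi> \<Longrightarrow> C \<in> Cl X \<phi> \<Longrightarrow> A \<subseteq> C \<Longrightarrow> \<phi> A \<subseteq> C"
  using closure_operator_mono[of X \<phi> A C] by (simp add: mem_Cl_iff)

lemma Cl_Int:
  assumes co: "closure_operator X \<phi>" and "C \<in> Cl X \<phi>" "D \<in> Cl X \<phi>"
  shows "C \<inter> D \<in> Cl X \<phi>"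
proof -
  have "C \<inter> D \<subseteq> X" using assms(2) by (auto simp: mem_Cl_iff)
  with assms show ?thesis
    using closure_least[OF co, of C "C \<inter> D"] closure_least[OF co, of D "C \<inter> D"]
      closure_operator_extensive[OF co, of "C \<inter> D"]
    by (auto simp: mem_Cl_iff)
qed

lemma covers_in_Cl_insert:
  assumes cg: "convex_geometry X \<phi>" and cover: "covers_in (Cl X \<phi>) c d"
  shows "\<exists>x \<in> X. x \<notin> c \<and> d = insert x c"
proof -
  have co: "closure_operator X \<phi>" and ae: "anti_exchange X \<phi>"
    using cg unfolding convex_geometry_def by auto
  have c: "c \<in> Cl X \<phi>" and d: "d \<in> Cl X \<phi>" and "c \<subset> d"
    and no_between: "\<not> (\<exists>e \<in> Cl X \<phi>. c \<subset> e \<and> e \<subset> d)"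
    using cover unfolding covers_in_def by auto
  have dX: "d \<subseteq> X" using d by (simp add: mem_Cl_iff)
  obtain x where x: "x \<in> d" "x \<notin> c" using \<open>c \<subset> d\<close> by blast
  have closure_insert: "\<phi> (c \<union> {z}) = d" if "z \<in> d" "z \<notin> c" for z
  proof -
    have cz: "c \<union> {z} \<subseteq> X" using that \<open>c \<subset> d\<close> dX by blast
    have "\<phi> (c \<union> {z}) \<in> Cl X \<phi>" using closure_in_Cl[OF co cz] .
    moreover have "c \<subset> \<phi> (c \<union> {z})"
      using closure_operator_extensive[OF co cz] that by blast
    moreover have "\<phi> (c \<union> {z}) \<subseteq> d"
      using closure_least[OF co d, of "c \<union> {z}"] that \<open>c \<subset> d\<close> by blast
    ultimately show ?thesis using no_between by blast
  qed
  have "d = insert x c"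
  proof (rule ccontr)
    assume "d \<noteq> insert x c"
    then obtain y where y: "y \<in> d" "y \<notin> c" "y \<noteq> x" using x \<open>c \<subset> d\<close> by blast
    have "x \<in> \<phi> (c \<union> {y})" "y \<in> \<phi> (c \<union> {x})"
      using closure_insert[OF y(1,2)] closure_insert[OF x] x y by auto
    moreover have "x \<in> X" "y \<in> X" using x y dX by auto
    ultimately show False using ae c x y unfolding anti_exchange_def by metis
  qed
  with x dX show ?thesis by blast
qed

definition extreme_points :: "'a set \<Rightarrow> ('a set \<Rightarrow> 'a set) \<Rightarrow> 'a set" where
  "extreme_points X \<phi> = {x \<in> X. \<phi> {x} - {x} \<in> Cl X \<phi>}"

lemma weakly_atomicD:
  "weakly_atomic L \<Longrightarrow> a \<in> L \<Longrightarrow> b \<in> L \<Longrightarrow> a \<subset> b \<Longrightarrow>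
    \<exists>c d. a \<subseteq> c \<and> d \<subseteq> b \<and> covers_in L c d"
  unfolding weakly_atomic_def by blast

lemma extreme_point_in_interval:
  assumes cg: "convex_geometry X \<phi>" and wa: "weakly_atomic (Cl X \<phi>)"
    and B: "B \<in> Cl X \<phi>" and A: "A \<in> Cl X \<phi>" and "B \<subset> A"
  shows "\<exists>x \<in> A - B. x \<in> extreme_points X \<phi>"
proof -
  have co: "closure_operator X \<phi>" using cg unfolding convex_geometry_def by simp
  obtain c d where "B \<subseteq> c" "d \<subseteq> A" and cd: "covers_in (Cl X \<phi>) c d"
    using weakly_atomicD[OF wa B A \<open>B \<subset> A\<close>] by blast
  obtain x where x: "x \<in> X" "x \<notin> c" "d = insert x c"
    using covers_in_Cl_insert[OF cg cd] by blast
  have c: "c \<in> Cl X \<phi>" and d: "d \<in> Cl X \<phi>" using cd unfolding covers_in_def by auto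
  have px: "\<phi> {x} \<in> Cl X \<phi>" and "x \<in> \<phi> {x}" and "\<phi> {x} \<subseteq> d"
    using closure_in_Cl[OF co, of "{x}"] closure_operator_extensive[OF co, of "{x}"]
      closure_least[OF co d, of "{x}"] x by auto
  define K where "K = \<phi> {x} \<inter> c"
  have K: "K \<in> Cl X \<phi>" unfolding K_def using Cl_Int[OF co px c] .
  have "K \<subset> \<phi> {x}" unfolding K_def using \<open>x \<in> \<phi> {x}\<close> x(2) by blast
  obtain c' d' where "K \<subseteq> c'" "d' \<subseteq> \<phi> {x}" and cd': "covers_in (Cl X \<phi>) c' d'"
    using weakly_atomicD[OF wa K px \<open>K \<subset> \<phi> {x}\<close>] by blast
  obtain y where y: "y \<notin> c'" "d' = insert y c'"
    using covers_in_Cl_insert[OF cg cd'] by blast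
  have c': "c' \<in> Cl X \<phi>" and d': "d' \<in> Cl X \<phi>" using cd' unfolding covers_in_def by auto
  \<comment> \<open>\<open>y \<in> \<phi>{x} - c \<subseteq> d - c = {x}\<close>, so the lower cover \<open>c'\<close> of \<open>d' = \<phi>{x}\<close> is \<open>\<phi>{x} - {x}\<close>.\<close>
  have "y \<in> \<phi> {x}" "y \<notin> K" using y \<open>d' \<subseteq> \<phi> {x}\<close> \<open>K \<subseteq> c'\<close> by auto
  then have "y = x" using \<open>\<phi> {x} \<subseteq> d\<close> x(3) unfolding K_def by blast
  then have "d' = \<phi> {x}"
    using closure_least[OF co d', of "{x}"] y(2) \<open>d' \<subseteq> \<phi> {x}\<close> by auto
  then have "\<phi> {x} - {x} = c'" using y \<open>y = x\<close> by blast
  with c' x(1) have "x \<in> extreme_points X \<phi>" unfolding extreme_points_def by simp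
  moreover have "x \<in> A - B" using x \<open>B \<subseteq> c\<close> \<open>d \<subseteq> A\<close> by blast
  ultimately show ?thesis by blast
qed

lemma closure_of_extreme_points:
  assumes cg: "convex_geometry X \<phi>" and wa: "weakly_atomic (Cl X \<phi>)"
    and A: "A \<in> Cl X \<phi>"
  shows "\<phi> (A \<inter> extreme_points X \<phi>) = A"
proof (rule ccontr)
  have co: "closure_operator X \<phi>" using cg unfolding convex_geometry_def by auto
  let ?E = "A \<inter> extreme_points X \<phi>"
  have "?E \<subseteq> X" using A by (auto simp: mem_Cl_iff)
  then have B: "\<phi> ?E \<in> Cl X \<phi>" and "?E \<subseteq> \<phi> ?E"
    by (rule closure_in_Cl[OF co], rule closure_operator_extensive[OF co])
  assume "\<phi> ?E \<noteq> A"
  with closure_least[OF co A, of ?E] have "\<phi> ?E \<subset> A" by blast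
  with extreme_point_in_interval[OF cg wa B A] \<open>?E \<subseteq> \<phi> ?E\<close> show False by blast
qed

lemma completely_join_irreducible_closure_singleton:
  assumes co: "closure_operator X \<phi>" and "x \<in> X" and lower: "\<phi> {x} - {x} \<in> Cl X \<phi>"
  shows "completely_join_irreducible (Cl X \<phi>) (\<phi> {x})"
proof -
  have px: "\<phi> {x} \<in> Cl X \<phi>" and "x \<in> \<phi> {x}"
    using closure_in_Cl[OF co, of "{x}"] closure_operator_extensive[OF co, of "{x}"] \<open>x \<in> X\<close>
    by auto
  have below: "z \<subseteq> \<phi> {x} - {x}" if "z \<in> Cl X \<phi>" "z \<subset> \<phi> {x}" for z
    using closure_least[OF co that(1), of "{x}"] that(2) by blast
  then have "covers_in (Cl X \<phi>) (\<phi> {x} - {x}) (\<phi> {x})"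
    unfolding covers_in_def using lower px \<open>x \<in> \<phi> {x}\<close> by blast
  then show ?thesis
    unfolding completely_join_irreducible_def using px lower below by blast
qed

lemma spatial_if_generated_by_points:
  assumes co: "closure_operator X \<phi>" and "Y \<subseteq> X"
    and generated: "\<And>A. A \<in> Cl X \<phi> \<Longrightarrow> \<phi> (A \<inter> Y) = A"
    and cji: "\<And>y. y \<in> Y \<Longrightarrow> completely_join_irreducible (Cl X \<phi>) (\<phi> {y})"
  shows "spatial (Cl X \<phi>)"
  unfolding spatial_def
proof
  fix A assume A: "A \<in> Cl X \<phi>"
  let ?S = "(\<lambda>y. \<phi> {y}) ` (A \<inter> Y)"
  have "is_join_in (Cl X \<phi>) ?S A"
    unfolding is_join_in_def
  proof (intro conjI ballI impI)
    show "s \<subseteq> A" if "s \<in> ?S" for s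
      using that closure_least[OF co A, of "{_}"] by blast
    show "A \<subseteq> B" if B: "B \<in> Cl X \<phi>" and upper: "\<forall>s\<in>?S. s \<subseteq> B" for B
    proof -
      have "y \<in> B" if "y \<in> A \<inter> Y" for y
        using upper closure_operator_extensive[OF co, of "{y}"] that \<open>Y \<subseteq> X\<close> by blast
      then show ?thesis using closure_least[OF co B, of "A \<inter> Y"] generated[OF A] by blast
    qed
  qed (fact A)
  moreover have "?S \<subseteq> {y. completely_join_irreducible (Cl X \<phi>) y}" using cji by blast
  ultimately show "\<exists>S. S \<subseteq> {y. completely_join_irreducible (Cl X \<phi>) y} \<and> is_join_in (Cl X \<phi>) S A"
    by blast
qed

definition restrict_closure :: "'a set \<Rightarrow> ('a set \<Rightarrow> 'a set) \<Rightarrow> 'a set \<Rightarrow> 'a set" where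
  "restrict_closure Y \<phi> A = \<phi> A \<inter> Y"

lemma closure_operator_restrict:
  assumes co: "closure_operator X \<phi>" and "Y \<subseteq> X"
  shows "closure_operator Y (restrict_closure Y \<phi>)"
  unfolding closure_operator_def restrict_closure_def
proof (intro conjI allI impI)
  fix A assume "A \<subseteq> Y"
  then have AX: "A \<subseteq> X" using \<open>Y \<subseteq> X\<close> by blast
  then have "A \<subseteq> \<phi> A" by (rule closure_operator_extensive[OF co])
  then show "A \<subseteq> \<phi> A \<inter> Y" using \<open>A \<subseteq> Y\<close> by blast
  show "\<phi> A \<inter> Y \<subseteq> Y" by blast
  have "\<phi> (\<phi> A \<inter> Y) \<subseteq> \<phi> A"
    using closure_least[OF co closure_in_Cl[OF co AX]] by blast
  moreover have "\<phi> A \<subseteq> \<phi> (\<phi> A \<inter> Y)"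
    using closure_operator_mono[OF co, of A "\<phi> A \<inter> Y"] \<open>A \<subseteq> \<phi> A\<close> \<open>A \<subseteq> Y\<close> \<open>Y \<subseteq> X\<close> by blast
  ultimately show "\<phi> (\<phi> A \<inter> Y) \<inter> Y = \<phi> A \<inter> Y" by blast
next
  fix A B assume "A \<subseteq> B \<and> B \<subseteq> Y"
  then show "\<phi> A \<inter> Y \<subseteq> \<phi> B \<inter> Y" using closure_operator_mono[OF co, of A B] \<open>Y \<subseteq> X\<close> by blast
qed

lemma anti_exchange_restrict:
  assumes co: "closure_operator X \<phi>" and ae: "anti_exchange X \<phi>" and "Y \<subseteq> X"
  shows "anti_exchange Y (restrict_closure Y \<phi>)"
  unfolding anti_exchange_def
proof (intro ballI impI)
  fix A x y assume A: "A \<in> Cl Y (restrict_closure Y \<phi>)" and "x \<in> Y" "y \<in> Y" "x \<noteq> y"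
    and x_in: "x \<in> restrict_closure Y \<phi> (A \<union> {y})" and "x \<notin> A"
  have "A \<subseteq> X" and A_eq: "\<phi> A \<inter> Y = A"
    using A \<open>Y \<subseteq> X\<close> unfolding mem_Cl_iff restrict_closure_def by auto
  have "A \<subseteq> \<phi> A" "\<phi> A \<subseteq> X" and cA: "\<phi> A \<in> Cl X \<phi>"
    using closure_operator_extensive[OF co \<open>A \<subseteq> X\<close>] closure_in_Cl[OF co \<open>A \<subseteq> X\<close>]
    by (auto simp: mem_Cl_iff)
  \<comment> \<open>\<open>A\<close> need not be \<open>\<phi>\<close>-closed, so anti-exchange is applied to \<open>\<phi> A\<close> instead.\<close>
  have mono_insert: "\<phi> (A \<union> {z}) \<subseteq> \<phi> (\<phi> A \<union> {z})" if "z \<in> Y" for z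
    using closure_operator_mono[OF co, of "A \<union> {z}" "\<phi> A \<union> {z}"] \<open>A \<subseteq> \<phi> A\<close> \<open>\<phi> A \<subseteq> X\<close>
      that \<open>Y \<subseteq> X\<close> by blast
  have "x \<in> \<phi> (\<phi> A \<union> {y})" "x \<notin> \<phi> A"
    using x_in mono_insert[OF \<open>y \<in> Y\<close>] A_eq \<open>x \<notin> A\<close> \<open>x \<in> Y\<close>
    unfolding restrict_closure_def by auto
  then have "y \<notin> \<phi> (\<phi> A \<union> {x})"
    using ae cA \<open>x \<in> Y\<close> \<open>y \<in> Y\<close> \<open>x \<noteq> y\<close> \<open>Y \<subseteq> X\<close> unfolding anti_exchange_def by blast
  then show "y \<notin> restrict_closure Y \<phi> (A \<union> {x})"
    using mono_insert[OF \<open>x \<in> Y\<close>] unfolding restrict_closure_def by blast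
qed

lemma Int_in_Cl_restrict:
  assumes co: "closure_operator X \<phi>" and C: "C \<in> Cl X \<phi>"
  shows "C \<inter> Y \<in> Cl Y (restrict_closure Y \<phi>)"
proof -
  have "C \<inter> Y \<subseteq> \<phi> (C \<inter> Y)" "\<phi> (C \<inter> Y) \<subseteq> C"
    using closure_operator_extensive[OF co, of "C \<inter> Y"] closure_least[OF co C, of "C \<inter> Y"] C
    by (auto simp: mem_Cl_iff)
  then show ?thesis unfolding mem_Cl_iff restrict_closure_def by blast
qed

lemma Cl_restrict:
  assumes co: "closure_operator X \<phi>" and "Y \<subseteq> X"
  shows "Cl Y (restrict_closure Y \<phi>) = (\<lambda>C. C \<inter> Y) ` Cl X \<phi>"
proof
  show "(\<lambda>C. C \<inter> Y) ` Cl X \<phi> \<subseteq> Cl Y (restrict_closure Y \<phi>)"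
    using Int_in_Cl_restrict[OF co] by blast
  show "Cl Y (restrict_closure Y \<phi>) \<subseteq> (\<lambda>C. C \<inter> Y) ` Cl X \<phi>"
  proof
    fix B assume "B \<in> Cl Y (restrict_closure Y \<phi>)"
    then have "B \<subseteq> X" "B = \<phi> B \<inter> Y"
      using \<open>Y \<subseteq> X\<close> unfolding mem_Cl_iff restrict_closure_def by auto
    then show "B \<in> (\<lambda>C. C \<inter> Y) ` Cl X \<phi>" using closure_in_Cl[OF co, of B] by blast
  qed
qed

lemma order_iso_Cl_restrict:
  assumes co: "closure_operator X \<phi>" and "Y \<subseteq> X"
    and generated: "\<And>A. A \<in> Cl X \<phi> \<Longrightarrow> \<phi> (A \<inter> Y) = A"
  shows "order_iso (Cl X \<phi>) (Cl Y (restrict_closure Y \<phi>))"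
  unfolding order_iso_def
proof (intro exI conjI)
  have le_iff: "A \<subseteq> B \<longleftrightarrow> A \<inter> Y \<subseteq> B \<inter> Y" if "A \<in> Cl X \<phi>" "B \<in> Cl X \<phi>" for A B
    using closure_operator_mono[OF co, of "A \<inter> Y" "B \<inter> Y"] generated[OF that(1)]
      generated[OF that(2)] \<open>Y \<subseteq> X\<close> by auto
  then show "\<forall>A\<in>Cl X \<phi>. \<forall>B\<in>Cl X \<phi>. A \<subseteq> B \<longleftrightarrow> A \<inter> Y \<subseteq> B \<inter> Y" by blast
  have "inj_on (\<lambda>C. C \<inter> Y) (Cl X \<phi>)"
    by (rule inj_onI) (use le_iff in blast)
  then show "bij_betw (\<lambda>C. C \<inter> Y) (Cl X \<phi>) (Cl Y (restrict_closure Y \<phi>))"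
    unfolding bij_betw_def using Cl_restrict[OF co \<open>Y \<subseteq> X\<close>] by simp
qed

lemma extreme_points_restrict:
  assumes co: "closure_operator X \<phi>" and "y \<in> Y" and y: "y \<in> extreme_points X \<phi>"
  shows "restrict_closure Y \<phi> {y} - {y} \<in> Cl Y (restrict_closure Y \<phi>)"
proof -
  have "restrict_closure Y \<phi> {y} - {y} = (\<phi> {y} - {y}) \<inter> Y"
    unfolding restrict_closure_def by blast
  then show ?thesis
    using Int_in_Cl_restrict[OF co] y unfolding extreme_points_def by simp
qed

theorem theorem3p1:
  fixes X :: "'a set" and \<phi> :: "'a set \<Rightarrow> 'a set"
  assumes "convex_geometry X \<phi>"
    and "weakly_atomic (Cl X \<phi>)"
  shows "spatial (Cl X \<phi>) \<and>
    (\<exists>Y \<psi>. Y \<subseteq> X \<and> closure_operator Y \<psi> \<and> anti_exchange Y \<psi> \<and>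
       order_iso (Cl X \<phi>) (Cl Y \<psi>) \<and>
       (\<forall>y \<in> Y. completely_join_irreducible (Cl Y \<psi>) (\<psi> {y})))"
proof -
  have co: "closure_operator X \<phi>" and ae: "anti_exchange X \<phi>"
    using assms(1) unfolding convex_geometry_def by simp_all
  define Y where "Y = extreme_points X \<phi>"
  define \<psi> where "\<psi> = restrict_closure Y \<phi>"
  have "Y \<subseteq> X" unfolding Y_def extreme_points_def by auto
  have generated: "\<phi> (A \<inter> Y) = A" if "A \<in> Cl X \<phi>" for A
    using closure_of_extreme_points[OF assms that] unfolding Y_def .
  have "spatial (Cl X \<phi>)"
    using spatial_if_generated_by_points[OF co \<open>Y \<subseteq> X\<close> generated]
      completely_join_irreducible_closure_singleton[OF co] unfolding Y_def extreme_points_def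
    by blast
  moreover have "closure_operator Y \<psi>"
    unfolding \<psi>_def using closure_operator_restrict[OF co \<open>Y \<subseteq> X\<close>] .
  moreover have "\<forall>y \<in> Y. completely_join_irreducible (Cl Y \<psi>) (\<psi> {y})"
    using completely_join_irreducible_closure_singleton[OF \<open>closure_operator Y \<psi>\<close>]
      extreme_points_restrict[OF co] unfolding \<psi>_def Y_def by blast
  ultimately show ?thesis
    using \<open>Y \<subseteq> X\<close> anti_exchange_restrict[OF co ae \<open>Y \<subseteq> X\<close>]
      order_iso_Cl_restrict[OF co \<open>Y \<subseteq> X\<close> generated] unfolding \<psi>_def by blast
qed

end
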